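(* Let $f,g$ be proper, closed, convex, $K\in\mathbb{R}^{n\times p}$, and let $\mu_f\ge0$, $\mu_{g^*}\ge0$ be such that $f-\tfrac{\mu_f}{2}\|\cdot\|^2$ and $g^*-\tfrac{\mu_{g^*}}{2}\|\cdot\|^2$ are convex. Let $\dot y\in\mathbb{R}^n$, $\hat x^k\in\mathbb{R}^p$, $x^k\in\mathrm{dom} f$, $L_k>0$, and $\beta_{k-1}\ge\beta_k>0$. Define $$y^{k+1}:=\mathrm{prox}_{g^*/\beta_k}\big(\dot y+\tfrac{1}{\beta_k}K\hat x^k\big),\qquad x^{k+1}:=\mathrm{prox}_{f/L_k}\big(\hat x^k-\tfrac{1}{L_k}K^\top y^{k+1}\big).$$ Then for every $x\in\mathrm{dom} f$ and every $\tau_k\in(0,1]$, $$\begin{aligned}F_{\beta_k}(x^{k+1},\dot y)\le{}&(1-\tau_k)F_{\beta_{k-1}}(x^k,\dot y)+\tau_k\mathcal{L}(x,y^{k+1})+\tfrac{L_k\tau_k^2}{2}\big\|\tfrac{1}{\tau_k}[\hat x^k-(1-\tau_k)x^k]-x\big\|^2\\&-\tfrac{\mu_f(1-\tau_k)\tau_k}{2}\|x-x^k\|^2-\tfrac{\tau_k^2}{2}(L_k+\mu_f)\big\|\tfrac{1}{\tau_k}[x^{k+1}-(1-\tau_k)x^k]-x\big\|^2\\&-\tfrac{L_k}{2}\|x^{k+1}-\hat x^k\|^2+\tfrac{1}{2(\mu_{g^*}+\beta_k)}\|K(x^{k+1}-\hat x^k)\|^2\\&-\tfrac{1-\tau_k}{2}\big[\tau_k\beta_k-(\beta_{k-1}-\beta_k)\big]\big\|\nabla_u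 g_{\beta_k}(Kx^k,\dot y)-\dot y\big\|^2.\end{aligned}$$
   Context: $g^*$ is the Fenchel conjugate of $g$; $\mathcal{L}(x,y):=f(x)+\langle Kx,y\rangle-g^*(y)$. For a proper closed convex $h$ and $\gamma>0$, $\mathrm{prox}_{\gamma h}(x):=\arg\min_{z}\{h(z)+\tfrac{1}{2\gamma}\|z-x\|^2\}$. For $\beta>0$, $g_\beta(u,\dot y):=\max_{y}\{\langle u,y\rangle-g^*(y)-\tfrac{\beta}{2}\|y-\dot y\|^2\}$, whose gradient in $u$ is $\nabla_u g_\beta(u,\dot y)=\mathrm{prox}_{g^*/\beta}(\dot y+\tfrac1\beta u)$, and $F_\beta(x,\dot y):=f(x)+g_\beta(Kx,\dot y)$. Norms are Euclidean. *)

theory Defs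
  imports "HOL-Analysis.Analysis"
begin

text \<open>Extended-real-valued functions on Euclidean spaces (value \<infinity> outside the domain).\<close>

definition edom :: "('a \<Rightarrow> ereal) \<Rightarrow> 'a set" where
  "edom h = {x. h x < \<infinity>}"

definition proper_fun :: "('a \<Rightarrow> ereal) \<Rightarrow> bool" where
  "proper_fun h \<longleftrightarrow> (\<forall>x. h x \<noteq> -\<infinity>) \<and> (\<exists>x. h x < \<infinity>)"

definition closed_fun :: "('a::topological_space \<Rightarrow> ereal) \<Rightarrow> bool" where
  "closed_fun h \<longleftrightarrow> closed {(x, t::real). h x \<le> ereal t}"

definition convex_fun :: "('a::real_vector \<Rightarrow> ereal) \<Rightarrow> bool" where
  "convex_fun h \<longleftrightarrow> (\<forall>x y t. 0 \<le> t \<and> t \<le> 1 \<longrightarrow>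
      h ((1 - t) *\<^sub>R x + t *\<^sub>R y) \<le> ereal (1 - t) * h x + ereal t * h y)"

definition fconj :: "('a::real_inner \<Rightarrow> ereal) \<Rightarrow> 'a \<Rightarrow> ereal" where
  "fconj g y = (SUP x. ereal (inner x y) - g x)"

definition prox :: "real \<Rightarrow> ('a::real_normed_vector \<Rightarrow> ereal) \<Rightarrow> 'a \<Rightarrow> 'a" where
  "prox \<gamma> h x = (THE z. \<forall>w. h z + ereal (norm (z - x)^2 / (2 * \<gamma>))
                            \<le> h w + ereal (norm (w - x)^2 / (2 * \<gamma>)))"

definition g_beta :: "('a::real_inner \<Rightarrow> ereal) \<Rightarrow> real \<Rightarrow> 'a \<Rightarrow> 'a \<Rightarrow> ereal" where
  "g_beta g \<beta> u yd = (SUP y. ereal (inner u y) - fconj g y - ereal (\<beta> / 2 * norm (y - yd)^2))"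

text \<open>Gradient in u of g_beta, given by the formula prox_{g*/\<beta>}(yd + u/\<beta>).\<close>
definition grad_g_beta :: "('a::real_inner \<Rightarrow> ereal) \<Rightarrow> real \<Rightarrow> 'a \<Rightarrow> 'a \<Rightarrow> 'a" where
  "grad_g_beta g \<beta> u yd = prox (1 / \<beta>) (fconj g) (yd + (1 / \<beta>) *\<^sub>R u)"

definition F_beta :: "(real^'p \<Rightarrow> ereal) \<Rightarrow> (real^'n \<Rightarrow> ereal) \<Rightarrow> real^'p^'n
                       \<Rightarrow> real \<Rightarrow> real^'p \<Rightarrow> real^'n \<Rightarrow> ereal" where
  "F_beta f g K \<beta> x yd = f x + g_beta g \<beta> (K *v x) yd"

definition Lag :: "(real^'p \<Rightarrow> ereal) \<Rightarrow> (real^'n \<Rightarrow> ereal) \<Rightarrow> real^'p^'n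
                    \<Rightarrow> real^'p \<Rightarrow> real^'n \<Rightarrow> ereal" where
  "Lag f g K x y = f x + ereal (inner (K *v x) y) - fconj g y"

end

theory Submission
  imports Defs "HOL-Real_Asymp.Real_Asymp"
begin

(* For a mu-strongly convex h, the prox point p of v with step
   gamma satisfies the three-point inequality
     h p + |p - v|^2 / (2 gamma) + (mu + 1/gamma)/2 |w - p|^2 <= h w + |w - v|^2 / (2 gamma),
   obtained by comparing p with the points of the segment from p to w. On the primal side it is
   applied with w = (1 - tau) x^k + tau x, whose f-value is bounded by strong convexity of f.
   On the dual side the prox point grad g_beta(u) maximises the (mu_g* + beta)-strongly concave
   function <u, .> - g^* - beta/2 |. - dot y|^2. This gives the descent lemma for g_beta at
   K x^(k+1) = K xhat^k + K (x^(k+1) - xhat^k) and, comparing the maximisers at K xhat^k and K x^k,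
   the bound against g_(beta_(k-1)) at K x^k; expanding |(1 - tau) y* + tau dot y - y^(k+1)|^2 >= 0,
   with y* the maximiser at K x^k, accounts for the change of the smoothing parameter. Prox points exist because the prox objective is lower semicontinuous and, by the
   minorant with linear decay that strong convexity provides, large outside a ball. *)

lemma closed_fun_closed_sublevel:
  fixes h :: "'a::t2_space \<Rightarrow> ereal"
  assumes "closed_fun h"
  shows "closed {x. h x \<le> ereal t}"
proof -
  have "closed ((\<lambda>x. (x, t)) -` {(x, s). h x \<le> ereal s})"
    by (rule continuous_closed_vimage[OF assms[unfolded closed_fun_def]]) (intro continuous_intros)
  then show ?thesis
    by (simp add: vimage_def)
qed

lemma closed_fun_add_continuous:
  fixes h :: "'a::t2_space \<Rightarrow> ereal"
  assumes "closed_fun h" and "\<And>x. isCont q x"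
  shows "closed_fun (\<lambda>x. h x + ereal (q x))"
proof -
  have "h x + ereal (q x) \<le> ereal t \<longleftrightarrow> h x \<le> ereal (t - q x)" for x t
    by (cases "h x") auto
  then have "{(x, t). h x + ereal (q x) \<le> ereal t}
      = (\<lambda>p. (fst p, snd p - q (fst p))) -` {(x, t). h x \<le> ereal t}"
    by auto
  moreover have "closed \<dots>"
    by (rule continuous_closed_vimage[OF assms(1)[unfolded closed_fun_def]])
      (use assms(2) in \<open>auto intro!: continuous_intros continuous_at_compose[of _ fst q, unfolded o_def]\<close>)
  ultimately show ?thesis
    unfolding closed_fun_def by simp
qed

lemma closed_fun_attains_min_on_compact:
  fixes h :: "'a::t2_space \<Rightarrow> ereal"
  assumes "closed_fun h" and "compact S" and "S \<noteq> {}"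
  shows "\<exists>l\<in>S. \<forall>z\<in>S. h l \<le> h z"
proof -
  define m where "m = (INF z\<in>S. h z)"
  have "S \<inter> (\<Inter>t\<in>{t. m < ereal t}. {x. h x \<le> ereal t}) \<noteq> {}"
  proof (rule compact_imp_fip_image[OF \<open>compact S\<close>])
    show "closed {x. h x \<le> ereal t}" for t
      using assms(1) by (rule closed_fun_closed_sublevel)
  next
    fix T assume T: "finite T" "T \<subseteq> {t. m < ereal t}"
    show "S \<inter> (\<Inter>t\<in>T. {x. h x \<le> ereal t}) \<noteq> {}"
    proof (cases "T = {}")
      case False
      then have "m < ereal (Min T)"
        using T Min_in by blast
      then obtain x where "x \<in> S" "h x < ereal (Min T)"
        unfolding m_def by (auto simp: INF_less_iff)
      moreover have "h x \<le> ereal t" if "t \<in> T" for t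
        using Min_le[OF T(1) that] \<open>h x < ereal (Min T)\<close> by (metis ereal_less_eq(3) less_imp_le order_trans)
      ultimately show ?thesis
        by blast
    qed (use \<open>S \<noteq> {}\<close> in simp)
  qed
  then obtain l where "l \<in> S" and lmem: "l \<in> (\<Inter>t\<in>{t. m < ereal t}. {x. h x \<le> ereal t})"
    by blast
  have l: "h l \<le> ereal t" if "m < ereal t" for t
    using INT_D[OF lmem, of t] that by simp
  have "h l \<le> m"
  proof (rule ccontr)
    assume "\<not> h l \<le> m"
    then obtain t where "m < ereal t" "ereal t < h l"
      by (meson ereal_dense2 not_le)
    then show False
      using l[of t] by simp
  qed
  moreover have "m \<le> h z" if "z \<in> S" for z
    unfolding m_def using that by (rule INF_lower)
  ultimately show ?thesis
    using \<open>l \<in> S\<close> by (auto intro: order_trans[OF \<open>h l \<le> m\<close>])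
qed

lemma closed_fun_fconj: "closed_fun (fconj g)"
proof -
  have eq: "{(y, t). fconj g y \<le> ereal t} = (\<Inter>x. {(y, t). ereal (inner x y) - g x \<le> ereal t})"
    unfolding fconj_def by (auto simp: SUP_le_iff)
  have "closed {(y, t). ereal (inner x y) - g x \<le> ereal t}" for x
  proof (cases "g x")
    case (real a)
    then have "{(y, t). ereal (inner x y) - g x \<le> ereal t} = {p. inner x (fst p) - a \<le> snd p}"
      by auto
    then show ?thesis
      by (simp add: closed_Collect_le continuous_intros)
  qed simp_all
  then show ?thesis
    unfolding closed_fun_def eq by (intro closed_INT) auto
qed

lemma fconj_proper_or_top:
  assumes "proper_fun g"
  shows "proper_fun (fconj g) \<or> (\<forall>y. fconj g y = \<infinity>)"
proof -
  obtain x0 where "g x0 < \<infinity>" "g x0 \<noteq> -\<infinity>"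
    using assms unfolding proper_fun_def by blast
  then obtain a where a: "g x0 = ereal a"
    by (cases "g x0") auto
  have "ereal (inner x0 y - a) \<le> fconj g y" for y
    unfolding fconj_def using SUP_upper[of x0 UNIV "\<lambda>x. ereal (inner x y) - g x"] by (simp add: a)
  then have "fconj g y \<noteq> -\<infinity>" for y
    by (metis MInfty_neq_ereal(1) ereal_infty_less_eq(2))
  then show ?thesis
    unfolding proper_fun_def by (metis less_ereal.simps(4) ereal_less_PInfty not_infty_ereal)
qed

lemma proper_fun_edom_ereal:
  assumes "proper_fun h" and "x \<in> edom h"
  obtains X where "h x = ereal X"
  using assms by (cases "h x") (auto simp: proper_fun_def edom_def)

lemma norm_convex_comb_diff_sq:
  fixes a b v :: "'a::real_inner"
  shows "norm ((1 - t) *\<^sub>R a + t *\<^sub>R b - v)^2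
       = (1 - t) * norm (a - v)^2 + t * norm (b - v)^2 - t * (1 - t) * norm (a - b)^2"
proof -
  have "(1 - t) *\<^sub>R a + t *\<^sub>R b - v = (1 - t) *\<^sub>R (a - v) + t *\<^sub>R (b - v)"
    by (simp add: algebra_simps)
  moreover have "a - b = (a - v) - (b - v)"
    by simp
  ultimately show ?thesis
    by (simp only:) (simp add: power2_norm_eq_inner inner_add_left inner_add_right inner_diff_left
        inner_diff_right inner_commute algebra_simps)
qed

lemma strongly_convex_fun_comb_le:
  fixes h :: "'a::real_inner \<Rightarrow> ereal"
  assumes cv: "convex_fun (\<lambda>z. h z - ereal (\<mu> / 2 * norm z^2))"
    and "h a = ereal A" "h b = ereal B" "0 \<le> t" "t \<le> 1"
  shows "h ((1 - t) *\<^sub>R a + t *\<^sub>R b)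
      \<le> ereal ((1 - t) * A + t * B - \<mu> / 2 * t * (1 - t) * norm (a - b)^2)"
proof -
  let ?m = "(1 - t) *\<^sub>R a + t *\<^sub>R b"
  have "h ?m - ereal (\<mu> / 2 * norm ?m^2)
      \<le> ereal (1 - t) * (h a - ereal (\<mu> / 2 * norm a^2)) + ereal t * (h b - ereal (\<mu> / 2 * norm b^2))"
    using cv assms(4,5) unfolding convex_fun_def by blast
  also have "\<dots> = ereal ((1 - t) * (A - \<mu> / 2 * norm a^2) + t * (B - \<mu> / 2 * norm b^2))"
    by (simp add: assms(2,3))
  finally have "h ?m
      \<le> ereal ((1 - t) * (A - \<mu> / 2 * norm a^2) + t * (B - \<mu> / 2 * norm b^2) + \<mu> / 2 * norm ?m^2)"
    by (cases "h ?m") auto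
  also have "norm ?m^2 = (1 - t) * norm a^2 + t * norm b^2 - t * (1 - t) * norm (a - b)^2"
    using norm_convex_comb_diff_sq[of t a b 0] by simp
  also have "ereal ((1 - t) * (A - \<mu> / 2 * norm a^2) + t * (B - \<mu> / 2 * norm b^2)
        + \<mu> / 2 * ((1 - t) * norm a^2 + t * norm b^2 - t * (1 - t) * norm (a - b)^2))
      = ereal ((1 - t) * A + t * B - \<mu> / 2 * t * (1 - t) * norm (a - b)^2)"
    by (simp add: field_simps)
  finally show ?thesis .
qed

lemma strongly_convex_closed_fun_minorant:
  fixes h :: "'a::euclidean_space \<Rightarrow> ereal"
  assumes cl: "closed_fun h" and nm: "\<And>x. h x \<noteq> -\<infinity>"
    and cv: "convex_fun (\<lambda>z. h z - ereal (\<mu> / 2 * norm z^2))" and "\<mu> \<ge> 0"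
    and x0: "h x0 = ereal a"
  shows "\<exists>c B. \<forall>z. ereal (c - B * norm (z - x0)) \<le> h z"
proof -
  obtain l where "l \<in> cball x0 1" and l: "\<And>z. z \<in> cball x0 1 \<Longrightarrow> h l \<le> h z"
    using closed_fun_attains_min_on_compact[OF cl compact_cball, of x0 1] by auto
  obtain c where c: "h l = ereal c"
    using l[of x0] nm[of l] x0 by (cases "h l") auto
  have ca: "c \<le> a"
    using l[of x0] c x0 by simp
  have "ereal (c - (a - c) * norm (z - x0)) \<le> h z" for z
  proof (cases "norm (z - x0) \<le> 1")
    case True
    then have "ereal c \<le> h z"
      using l c by (simp add: dist_norm norm_minus_commute)
    moreover have "c - (a - c) * norm (z - x0) \<le> c"
      using ca by simp
    ultimately show ?thesis
      by (meson ereal_less_eq(3) order_trans)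
  next
    case False
    \<comment> \<open>The point of the segment from x0 to z at distance 1 from x0 lies in the ball, and
      convexity along the segment turns the bound there into a linear one.\<close>
    define s where "s = norm (z - x0)"
    define t where "t = 1 / s"
    have s1: "s > 1"
      using False by (simp add: s_def)
    then have t01: "0 \<le> t" "t \<le> 1" and st: "s * t = 1"
      by (auto simp: t_def)
    show ?thesis
    proof (cases "h z")
      case (real b)
      have "(1 - t) *\<^sub>R x0 + t *\<^sub>R z - x0 = t *\<^sub>R (z - x0)"
        by (simp add: algebra_simps)
      then have "norm ((1 - t) *\<^sub>R x0 + t *\<^sub>R z - x0) = 1"
        using st t01 by (simp add: s_def mult.commute)
      then have "ereal c \<le> h ((1 - t) *\<^sub>R x0 + t *\<^sub>R z)"
        using l c by (simp add: dist_norm norm_minus_commute)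
      also have "\<dots> \<le> ereal ((1 - t) * a + t * b - \<mu> / 2 * t * (1 - t) * norm (x0 - z)^2)"
        using strongly_convex_fun_comb_le[OF cv x0 real t01] .
      finally have "c \<le> (1 - t) * a + t * b"
        using \<open>\<mu> \<ge> 0\<close> t01
        by (smt (verit) ereal_less_eq(3) mult_nonneg_nonneg zero_le_power2 divide_nonneg_nonneg)
      then have "s * c \<le> (s - 1) * a + b"
        using s1 st mult_left_mono[of c "(1 - t) * a + t * b" s] by (simp add: algebra_simps)
      then show ?thesis
        using real ca by (simp add: s_def[symmetric] algebra_simps)
    qed (use nm in auto)
  qed
  then show ?thesis
    by blast
qed

definition prox_obj :: "real \<Rightarrow> ('a::real_normed_vector \<Rightarrow> ereal) \<Rightarrow> 'a \<Rightarrow> 'a \<Rightarrow> ereal" where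
  "prox_obj \<gamma> h v z = h z + ereal (norm (z - v)^2 / (2 * \<gamma>))"

lemma prox_obj_coercive:
  fixes h :: "'a::euclidean_space \<Rightarrow> ereal"
  assumes cl: "closed_fun h" and nm: "\<And>x. h x \<noteq> -\<infinity>"
    and cv: "convex_fun (\<lambda>z. h z - ereal (\<mu> / 2 * norm z^2))" and "\<mu> \<ge> 0"
    and x0: "h x0 = ereal a" and "\<gamma> > 0"
  shows "\<exists>R. \<forall>z. R < norm (z - x0) \<longrightarrow> prox_obj \<gamma> h v x0 < prox_obj \<gamma> h v z"
proof -
  obtain c B where minor: "\<And>z. ereal (c - B * norm (z - x0)) \<le> h z"
    using strongly_convex_closed_fun_minorant[OF cl nm cv \<open>\<mu> \<ge> 0\<close> x0] by blast
  define d where "d = norm (x0 - v)"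
  define E where "E = a + d^2 / (2 * \<gamma>)"
  have "filterlim (\<lambda>r. c - B * r + (r - d)^2 / (2 * \<gamma>)) at_top at_top"
    using \<open>\<gamma> > 0\<close> by real_asymp
  then obtain R where R: "\<And>r. R \<le> r \<Longrightarrow> E < c - B * r + (r - d)^2 / (2 * \<gamma>)"
    unfolding filterlim_at_top_dense eventually_at_top_linorder by blast
  have "prox_obj \<gamma> h v x0 < prox_obj \<gamma> h v z" if "max R d < norm (z - x0)" for z
  proof -
    define r where "r = norm (z - x0)"
    have "r \<le> norm (z - v) + d"
      using norm_triangle_ineq[of "z - v" "v - x0"] by (simp add: r_def d_def norm_minus_commute)
    then have "(r - d)^2 \<le> norm (z - v)^2"
      using that by (intro power_mono) (auto simp: r_def)
    then have "ereal (c - B * r + (r - d)^2 / (2 * \<gamma>)) \<le> prox_obj \<gamma> h v z"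
      unfolding prox_obj_def using minor[of z] \<open>\<gamma> > 0\<close>
      by (metis add_mono divide_right_mono ereal_less_eq(3) plus_ereal.simps(1) r_def
          less_imp_le zero_less_numeral mult_pos_pos)
    moreover have "prox_obj \<gamma> h v x0 = ereal E"
      by (simp add: prox_obj_def x0 E_def d_def)
    moreover have "E < c - B * r + (r - d)^2 / (2 * \<gamma>)"
      using R[of r] that by (simp add: r_def)
    ultimately show ?thesis
      by (metis ereal_less_eq(3) less_ereal.simps(1) order.strict_trans2)
  qed
  then show ?thesis
    by (metis max.cobounded1 order.strict_trans1)
qed

lemma prox_obj_has_minimizer:
  fixes h :: "'a::euclidean_space \<Rightarrow> ereal"
  assumes "proper_fun h" and cl: "closed_fun h"
    and cv: "convex_fun (\<lambda>z. h z - ereal (\<mu> / 2 * norm z^2))" and "\<mu> \<ge> 0" and "\<gamma> > 0"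
  shows "\<exists>p. \<forall>w. prox_obj \<gamma> h v p \<le> prox_obj \<gamma> h v w"
proof -
  have nm: "\<And>x. h x \<noteq> -\<infinity>"
    using \<open>proper_fun h\<close> by (simp add: proper_fun_def)
  obtain x0 where "h x0 < \<infinity>"
    using \<open>proper_fun h\<close> by (auto simp: proper_fun_def)
  then obtain a where x0: "h x0 = ereal a"
    using nm[of x0] by (cases "h x0") auto
  obtain R where R: "\<And>z. R < norm (z - x0) \<Longrightarrow> prox_obj \<gamma> h v x0 < prox_obj \<gamma> h v z"
    using prox_obj_coercive[OF cl nm cv \<open>\<mu> \<ge> 0\<close> x0 \<open>\<gamma> > 0\<close>] by blast
  have "closed_fun (prox_obj \<gamma> h v)"
    unfolding prox_obj_def using \<open>\<gamma> > 0\<close> by (intro closed_fun_add_continuous cl continuous_intros) auto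
  then obtain p where p: "\<And>z. z \<in> cball x0 \<bar>R\<bar> \<Longrightarrow> prox_obj \<gamma> h v p \<le> prox_obj \<gamma> h v z"
    using closed_fun_attains_min_on_compact[of _ "cball x0 \<bar>R\<bar>"] by force
  have "prox_obj \<gamma> h v p \<le> prox_obj \<gamma> h v w" for w
  proof (cases "w \<in> cball x0 \<bar>R\<bar>")
    case False
    then have "prox_obj \<gamma> h v x0 < prox_obj \<gamma> h v w"
      by (intro R) (simp add: dist_norm norm_minus_commute)
    then show ?thesis
      using p[of x0] by simp
  qed (rule p)
  then show ?thesis
    by blast
qed

lemma prox_obj_quadratic_growth:
  fixes h :: "'a::real_inner \<Rightarrow> ereal"
  assumes cv: "convex_fun (\<lambda>z. h z - ereal (\<mu> / 2 * norm z^2))" and "\<gamma> > 0"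
    and min: "\<And>w. prox_obj \<gamma> h v p \<le> prox_obj \<gamma> h v w"
    and hp: "h p = ereal P" and hw: "h w = ereal W"
  shows "P + norm (p - v)^2 / (2 * \<gamma>) + (\<mu> / 2 + 1 / (2 * \<gamma>)) * norm (w - p)^2
      \<le> W + norm (w - v)^2 / (2 * \<gamma>)"
proof -
  define k where "k = \<mu> / 2 + 1 / (2 * \<gamma>)"
  define D where "D = norm (w - p)^2"
  define qp where "qp = norm (p - v)^2 / (2 * \<gamma>)"
  define qw where "qw = norm (w - v)^2 / (2 * \<gamma>)"
  have along_segment: "P + qp + k * D \<le> W + qw + t * (k * D)" if "0 < t" "t \<le> 1" for t
  proof -
    let ?m = "(1 - t) *\<^sub>R p + t *\<^sub>R w"
    have "h ?m \<le> ereal ((1 - t) * P + t * W - \<mu> / 2 * t * (1 - t) * D)"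
      using strongly_convex_fun_comb_le[OF cv hp hw, of t] that by (simp add: D_def norm_minus_commute)
    moreover have "norm (?m - v)^2 / (2 * \<gamma>) = (1 - t) * qp + t * qw - t * (1 - t) * D / (2 * \<gamma>)"
      unfolding norm_convex_comb_diff_sq qp_def qw_def D_def using \<open>\<gamma> > 0\<close>
      by (simp add: field_simps norm_minus_commute)
    moreover have "h p + ereal qp \<le> h ?m + ereal (norm (?m - v)^2 / (2 * \<gamma>))"
      using min[of ?m] unfolding prox_obj_def qp_def .
    ultimately have "P + qp \<le> (1 - t) * P + t * W - \<mu> / 2 * t * (1 - t) * D
        + ((1 - t) * qp + t * qw - t * (1 - t) * D / (2 * \<gamma>))"
      unfolding hp by (cases "h ?m") auto
    then have "t * (P + qp) \<le> t * (W + qw - k * (1 - t) * D)"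
      unfolding k_def using \<open>\<gamma> > 0\<close> by (simp add: field_simps)
    then have "P + qp \<le> W + qw - k * (1 - t) * D"
      using \<open>0 < t\<close> by (simp add: mult_le_cancel_left_pos)
    moreover have "k * (1 - t) * D = k * D - t * (k * D)"
      by (simp add: algebra_simps)
    ultimately show ?thesis
      by linarith
  qed
  have "P + qp + k * D \<le> W + qw"
  proof (rule field_le_epsilon)
    fix e :: real
    assume "e > 0"
    define t where "t = min 1 (e / (\<bar>k * D\<bar> + 1))"
    have t: "0 < t" "t \<le> 1"
      using \<open>e > 0\<close> by (auto simp: t_def)
    have "t * (k * D) \<le> t * \<bar>k * D\<bar>"
      using t by (simp add: mult_left_mono)
    also have "\<dots> \<le> e / (\<bar>k * D\<bar> + 1) * \<bar>k * D\<bar>"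
      by (intro mult_right_mono) (auto simp: t_def)
    also have "\<dots> \<le> e"
      using \<open>e > 0\<close> by (simp add: field_simps)
    finally show "P + qp + k * D \<le> W + qw + e"
      using along_segment[OF t] by linarith
  qed
  then show ?thesis
    by (simp add: k_def D_def qp_def qw_def)
qed

lemma prox_minimizes:
  fixes h :: "'a::euclidean_space \<Rightarrow> ereal"
  assumes "proper_fun h" and "closed_fun h"
    and cv: "convex_fun (\<lambda>z. h z - ereal (\<mu> / 2 * norm z^2))" and "\<mu> \<ge> 0" and "\<gamma> > 0"
  shows "prox \<gamma> h v \<in> edom h" and "prox_obj \<gamma> h v (prox \<gamma> h v) \<le> prox_obj \<gamma> h v w"
proof -
  have nm: "\<And>x. h x \<noteq> -\<infinity>"
    using \<open>proper_fun h\<close> by (simp add: proper_fun_def)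
  obtain p where p: "\<And>w. prox_obj \<gamma> h v p \<le> prox_obj \<gamma> h v w"
    using prox_obj_has_minimizer[OF assms] by blast
  have fin: "h q \<noteq> \<infinity>" if "\<And>w. prox_obj \<gamma> h v q \<le> prox_obj \<gamma> h v w" for q
  proof -
    obtain x0 where "h x0 < \<infinity>"
      using \<open>proper_fun h\<close> by (auto simp: proper_fun_def)
    then show ?thesis
      using that[of x0] by (auto simp: prox_obj_def)
  qed
  have k: "\<mu> / 2 + 1 / (2 * \<gamma>) > 0"
    using \<open>\<mu> \<ge> 0\<close> \<open>\<gamma> > 0\<close> by (simp add: add_nonneg_pos)
  have unique: "q = p" if q: "\<And>w. prox_obj \<gamma> h v q \<le> prox_obj \<gamma> h v w" for q
  proof -
    obtain P where hp: "h p = ereal P"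
      using fin[OF p] nm[of p] by (cases "h p") auto
    obtain Q where hq: "h q = ereal Q"
      using fin[OF q] nm[of q] by (cases "h q") auto
    have "(\<mu> / 2 + 1 / (2 * \<gamma>)) * norm (q - p)^2 + (\<mu> / 2 + 1 / (2 * \<gamma>)) * norm (p - q)^2 \<le> 0"
      using prox_obj_quadratic_growth[OF cv \<open>\<gamma> > 0\<close> p hp hq]
        prox_obj_quadratic_growth[OF cv \<open>\<gamma> > 0\<close> q hq hp] by linarith
    then have "norm (q - p)^2 \<le> 0"
      using k by (simp add: norm_minus_commute mult_le_0_iff)
    then show "q = p"
      by simp
  qed
  have "prox \<gamma> h v = p"
    unfolding prox_def prox_obj_def[symmetric]
  proof (rule the_equality)
    fix q
    assume "\<forall>w. prox_obj \<gamma> h v q \<le> prox_obj \<gamma> h v w"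
    then show "q = p"
      by (intro unique) blast
  qed (use p in blast)
  then show "prox \<gamma> h v \<in> edom h" and "prox_obj \<gamma> h v (prox \<gamma> h v) \<le> prox_obj \<gamma> h v w"
    using fin[OF p] p by (auto simp: edom_def less_top)
qed

lemma prox_three_point:
  fixes h :: "'a::real_inner \<Rightarrow> ereal"
  assumes cv: "convex_fun (\<lambda>z. h z - ereal (\<mu> / 2 * norm z^2))" and "L > 0"
    and min: "\<And>w. prox_obj (1 / L) h (c - (1 / L) *\<^sub>R a) p \<le> prox_obj (1 / L) h (c - (1 / L) *\<^sub>R a) w"
    and "h p = ereal P" and "h w = ereal W"
  shows "P + L / 2 * norm (p - c)^2 + inner a (p - c) + (\<mu> + L) / 2 * norm (w - p)^2
      \<le> W + L / 2 * norm (w - c)^2 + inner a (w - c)"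
proof -
  have expand: "norm (y - (c - (1 / L) *\<^sub>R a))^2 / (2 * (1 / L))
      = L / 2 * norm (y - c)^2 + inner a (y - c) + norm a^2 / (2 * L)" for y
  proof -
    have "norm (y - (c - (1 / L) *\<^sub>R a))^2
        = norm (y - c)^2 + 2 * inner (y - c) ((1 / L) *\<^sub>R a) + norm ((1 / L) *\<^sub>R a)^2"
      using dot_norm[of "y - c" "(1 / L) *\<^sub>R a"] by (simp add: algebra_simps)
    then show ?thesis
      using \<open>L > 0\<close> by (simp add: inner_commute field_simps power2_eq_square)
  qed
  have "P + norm (p - (c - (1 / L) *\<^sub>R a))^2 / (2 * (1 / L)) + (\<mu> / 2 + 1 / (2 * (1 / L))) * norm (w - p)^2
      \<le> W + norm (w - (c - (1 / L) *\<^sub>R a))^2 / (2 * (1 / L))"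
    by (rule prox_obj_quadratic_growth[OF cv _ min assms(4,5)]) (use \<open>L > 0\<close> in simp)
  then show ?thesis
    unfolding expand by (simp add: field_simps)
qed

lemma inner_le_weighted_sq:
  fixes d w :: "'a::real_inner"
  assumes "c > 0"
  shows "inner d w \<le> c / 2 * norm w^2 + norm d^2 / (2 * c)"
proof -
  have "norm (c *\<^sub>R w - d)^2 = c^2 * norm w^2 - 2 * c * inner d w + norm d^2"
    using dot_norm_neg[of "c *\<^sub>R w" d] by (simp add: inner_commute power_mult_distrib)
  then have "2 * c * inner d w \<le> c^2 * norm w^2 + norm d^2"
    using zero_le_power2[of "norm (c *\<^sub>R w - d)"] by linarith
  then have "inner d w \<le> (c^2 * norm w^2 + norm d^2) / (2 * c)"
    using assms by (simp add: pos_le_divide_eq algebra_simps)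
  also have "\<dots> = c / 2 * norm w^2 + norm d^2 / (2 * c)"
    using assms by (simp add: field_simps power2_eq_square)
  finally show ?thesis .
qed

lemma grad_g_beta_max_growth:
  fixes g :: "'a::euclidean_space \<Rightarrow> ereal"
  assumes G: "proper_fun (fconj g)" and cv: "convex_fun (\<lambda>y. fconj g y - ereal (\<mu> / 2 * norm y^2))"
    and "\<mu> \<ge> 0" and "\<beta> > 0"
    and s: "s = grad_g_beta g \<beta> u yd" and "fconj g s = ereal S" and "fconj g y = ereal Y"
  shows "inner u y - Y - \<beta> / 2 * norm (y - yd)^2 + (\<mu> + \<beta>) / 2 * norm (y - s)^2
      \<le> inner u s - S - \<beta> / 2 * norm (s - yd)^2"
proof -
  have "yd + (1 / \<beta>) *\<^sub>R u = yd - (1 / \<beta>) *\<^sub>R (- u)"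
    by simp
  then have "prox_obj (1 / \<beta>) (fconj g) (yd - (1 / \<beta>) *\<^sub>R (- u)) s
      \<le> prox_obj (1 / \<beta>) (fconj g) (yd - (1 / \<beta>) *\<^sub>R (- u)) w" for w
    using prox_minimizes(2)[OF G closed_fun_fconj cv \<open>\<mu> \<ge> 0\<close>] \<open>\<beta> > 0\<close>
    unfolding s grad_g_beta_def by simp
  from prox_three_point[OF cv \<open>\<beta> > 0\<close> this assms(6,7)] show ?thesis
    by (simp add: inner_diff_right)
qed

lemma g_beta_ge:
  assumes "fconj g s = ereal S"
  shows "ereal (inner u s - S - \<beta> / 2 * norm (s - yd)^2) \<le> g_beta g \<beta> u yd"
  unfolding g_beta_def by (rule SUP_upper2[where i = s]) (simp_all add: assms)

text \<open>The descent lemma for the \<open>1 / (\<mu> + \<beta>)\<close>-smooth function \<open>g_beta g \<beta> \<cdot> yd\<close>.\<close>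

lemma g_beta_le_linearization:
  fixes g :: "'a::euclidean_space \<Rightarrow> ereal"
  assumes G: "proper_fun (fconj g)" and cv: "convex_fun (\<lambda>y. fconj g y - ereal (\<mu> / 2 * norm y^2))"
    and "\<mu> \<ge> 0" and "\<beta> > 0"
    and s: "s = grad_g_beta g \<beta> u yd" and S: "fconj g s = ereal S"
  shows "g_beta g \<beta> (u + d) yd
      \<le> ereal (inner u s - S - \<beta> / 2 * norm (s - yd)^2 + inner s d + norm d^2 / (2 * (\<mu> + \<beta>)))"
  unfolding g_beta_def
proof (rule SUP_least)
  fix y
  show "ereal (inner (u + d) y) - fconj g y - ereal (\<beta> / 2 * norm (y - yd)^2)
      \<le> ereal (inner u s - S - \<beta> / 2 * norm (s - yd)^2 + inner s d + norm d^2 / (2 * (\<mu> + \<beta>)))"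
  proof (cases "fconj g y")
    case (real Y)
    have "inner u y - Y - \<beta> / 2 * norm (y - yd)^2 + (\<mu> + \<beta>) / 2 * norm (y - s)^2
        \<le> inner u s - S - \<beta> / 2 * norm (s - yd)^2"
      by (rule grad_g_beta_max_growth[OF assms real])
    moreover have "inner d (y - s) \<le> (\<mu> + \<beta>) / 2 * norm (y - s)^2 + norm d^2 / (2 * (\<mu> + \<beta>))"
      using \<open>\<mu> \<ge> 0\<close> \<open>\<beta> > 0\<close> by (intro inner_le_weighted_sq) simp
    moreover have "inner (u + d) y = inner u y + inner d (y - s) + inner s d"
      by (simp add: inner_add_left inner_add_right inner_diff_right inner_commute)
    ultimately show ?thesis
      using real by simp
  qed (use G in \<open>auto simp: proper_fun_def\<close>)
qed

lemma g_beta_step_bound: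
  fixes g :: "'a::euclidean_space \<Rightarrow> ereal"
  assumes G: "proper_fun (fconj g)" and cv: "convex_fun (\<lambda>y. fconj g y - ereal (\<mu> / 2 * norm y^2))"
    and "\<mu> \<ge> 0" and "\<beta> > 0" and "\<tau> \<le> 1"
    and y1: "y1 = grad_g_beta g \<beta> u yd" "fconj g y1 = ereal Y1"
    and ys: "ys = grad_g_beta g \<beta> uk yd" "fconj g ys = ereal Ys"
  shows "g_beta g \<beta> (u + d) yd
      \<le> ereal ((1 - \<tau>) * (inner uk ys - Ys - \<beta>' / 2 * norm (ys - yd)^2)
        + inner y1 u - (1 - \<tau>) * inner y1 uk + inner y1 d - \<tau> * Y1 + norm d^2 / (2 * (\<mu> + \<beta>))
        - (1 - \<tau>) / 2 * (\<tau> * \<beta> - (\<beta>' - \<beta>)) * norm (ys - yd)^2)"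
proof -
  define n1 n2 n3 where "n1 = norm (y1 - ys)^2" and "n2 = norm (y1 - yd)^2" and "n3 = norm (ys - yd)^2"
  have "inner uk y1 - Y1 - \<beta> / 2 * n2 + (\<mu> + \<beta>) / 2 * n1 \<le> inner uk ys - Ys - \<beta> / 2 * n3"
    unfolding n1_def n2_def n3_def by (rule grad_g_beta_max_growth[OF G cv \<open>\<mu> \<ge> 0\<close> \<open>\<beta> > 0\<close> ys y1(2)])
  then have growth: "(1 - \<tau>) * (inner uk y1 - Y1 - \<beta> / 2 * n2 + (\<mu> + \<beta>) / 2 * n1)
      \<le> (1 - \<tau>) * (inner uk ys - Ys - \<beta> / 2 * n3)"
    using \<open>\<tau> \<le> 1\<close> by (simp add: mult_left_mono)
  have "\<tau> * (1 - \<tau>) * n3 \<le> (1 - \<tau>) * n1 + \<tau> * n2"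
    using norm_convex_comb_diff_sq[of \<tau> ys yd y1]
      zero_le_power2[of "norm ((1 - \<tau>) *\<^sub>R ys + \<tau> *\<^sub>R yd - y1)"]
    unfolding n1_def n2_def n3_def by (simp add: norm_minus_commute)
  then have comb: "\<beta> / 2 * (\<tau> * (1 - \<tau>) * n3) \<le> \<beta> / 2 * ((1 - \<tau>) * n1 + \<tau> * n2)"
    using \<open>\<beta> > 0\<close> by (simp add: mult_left_mono)
  have "0 \<le> (1 - \<tau>) * (\<mu> / 2 * n1)"
    using \<open>\<mu> \<ge> 0\<close> \<open>\<tau> \<le> 1\<close> by (simp add: n1_def)
  with growth comb have "inner u y1 - Y1 - \<beta> / 2 * n2 + inner y1 d + norm d^2 / (2 * (\<mu> + \<beta>))
      \<le> (1 - \<tau>) * (inner uk ys - Ys - \<beta>' / 2 * n3)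
        + inner y1 u - (1 - \<tau>) * inner y1 uk + inner y1 d - \<tau> * Y1 + norm d^2 / (2 * (\<mu> + \<beta>))
        - (1 - \<tau>) / 2 * (\<tau> * \<beta> - (\<beta>' - \<beta>)) * n3"
    by (simp add: field_simps inner_commute)
  moreover have "g_beta g \<beta> (u + d) yd
      \<le> ereal (inner u y1 - Y1 - \<beta> / 2 * n2 + inner y1 d + norm d^2 / (2 * (\<mu> + \<beta>)))"
    unfolding n2_def by (rule g_beta_le_linearization[OF G cv \<open>\<mu> \<ge> 0\<close> \<open>\<beta> > 0\<close> y1])
  ultimately show ?thesis
    unfolding n3_def by (meson ereal_less_eq(3) order_trans)
qed

lemma prox_linearized_primal_step:
  fixes f :: "real^'p \<Rightarrow> ereal" and K :: "real^'p^'n"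
  assumes F: "proper_fun f" "closed_fun f" and cv: "convex_fun (\<lambda>z. f z - ereal (\<mu> / 2 * norm z^2))"
    and "\<mu> \<ge> 0" and "L > 0" and "0 < \<tau>" and "\<tau> \<le> 1"
    and x1: "x1 = prox (1 / L) f (xhat - (1 / L) *\<^sub>R (transpose K *v y))"
    and X1: "f x1 = ereal X1" and Xk: "f xk = ereal Xk" and X: "f x = ereal X"
  shows "X1 + L / 2 * norm (x1 - xhat)^2 + inner y (K *v (x1 - xhat))
      \<le> (1 - \<tau>) * Xk + \<tau> * X + (1 - \<tau>) * inner y (K *v xk) + \<tau> * inner y (K *v x) - inner y (K *v xhat)
        + L * \<tau>^2 / 2 * norm ((1 / \<tau>) *\<^sub>R (xhat - (1 - \<tau>) *\<^sub>R xk) - x)^2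
        - \<mu> * (1 - \<tau>) * \<tau> / 2 * norm (x - xk)^2
        - \<tau>^2 / 2 * (L + \<mu>) * norm ((1 / \<tau>) *\<^sub>R (x1 - (1 - \<tau>) *\<^sub>R xk) - x)^2"
proof -
  define z where "z = (1 - \<tau>) *\<^sub>R xk + \<tau> *\<^sub>R x"
  have fz: "f z \<le> ereal ((1 - \<tau>) * Xk + \<tau> * X - \<mu> / 2 * \<tau> * (1 - \<tau>) * norm (xk - x)^2)"
    unfolding z_def using strongly_convex_fun_comb_le[OF cv Xk X] \<open>0 < \<tau>\<close> \<open>\<tau> \<le> 1\<close> by simp
  then obtain Z where Z: "f z = ereal Z"
    using F(1) by (cases "f z") (auto simp: proper_fun_def)
  have "prox_obj (1 / L) f (xhat - (1 / L) *\<^sub>R (transpose K *v y)) x1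
      \<le> prox_obj (1 / L) f (xhat - (1 / L) *\<^sub>R (transpose K *v y)) w" for w
    unfolding x1 using \<open>L > 0\<close> by (intro prox_minimizes(2)[OF F cv \<open>\<mu> \<ge> 0\<close>]) simp
  from prox_three_point[OF cv \<open>L > 0\<close> this X1 Z]
  have three: "X1 + L / 2 * norm (x1 - xhat)^2 + inner (transpose K *v y) (x1 - xhat)
      + (\<mu> + L) / 2 * norm (z - x1)^2
      \<le> Z + L / 2 * norm (z - xhat)^2 + inner (transpose K *v y) (z - xhat)" .
  have transpose: "inner (transpose K *v y) w = inner y (K *v w)" for w
    by (metis vector_transpose_matrix transpose_transpose dot_lmul_matrix)
  have rescale: "\<tau>^2 * norm ((1 / \<tau>) *\<^sub>R (a - (1 - \<tau>) *\<^sub>R xk) - x)^2 = norm (z - a)^2" for a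
  proof -
    have "(1 / \<tau>) *\<^sub>R (a - (1 - \<tau>) *\<^sub>R xk) - x = (1 / \<tau>) *\<^sub>R (a - z)"
      using \<open>0 < \<tau>\<close> by (simp add: z_def algebra_simps)
    then show ?thesis
      using \<open>0 < \<tau>\<close> by (simp add: power_mult_distrib norm_minus_commute power_divide)
  qed
  have "inner y (K *v (z - xhat)) = (1 - \<tau>) * inner y (K *v xk) + \<tau> * inner y (K *v x) - inner y (K *v xhat)"
    by (simp add: z_def matrix_vector_right_distrib matrix_vector_mult_diff_distrib
        matrix_vector_mult_scaleR inner_add_right inner_diff_right)
  then show ?thesis
    using three fz Z rescale[of xhat] rescale[of x1] unfolding transpose
    by (simp add: norm_minus_commute field_simps)
qed

lemma ereal_combine_step_bounds:
  assumes "F = ereal X1 + G" and "G \<le> ereal D"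
    and "Fp = ereal Xk + Gp" and "ereal E \<le> Gp" and "Lg = ereal Q" and "\<tau> \<le> 1"
    and "X1 + D \<le> (1 - \<tau>) * (Xk + E) + \<tau> * Q + S"
  shows "F \<le> ereal (1 - \<tau>) * Fp + ereal \<tau> * Lg + ereal S"
proof -
  have "F \<le> ereal ((1 - \<tau>) * (Xk + E) + \<tau> * Q + S)"
    using assms(1,2,7) by (metis add_left_mono ereal_less_eq(3) order_trans plus_ereal.simps(1))
  also have "ereal ((1 - \<tau>) * (Xk + E)) \<le> ereal (1 - \<tau>) * Fp"
    using assms(3,4,6) by (cases Gp) (auto simp: mult_left_mono)
  then have "ereal ((1 - \<tau>) * (Xk + E) + \<tau> * Q + S) \<le> ereal (1 - \<tau>) * Fp + ereal \<tau> * Lg + ereal S"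
    using assms(5) by (cases "ereal (1 - \<tau>) * Fp") auto
  finally show ?thesis .
qed

theorem lemma2:
  fixes f :: "real^'p \<Rightarrow> ereal" and g :: "real^'n \<Rightarrow> ereal" and K :: "real^'p^'n"
    and \<mu>f \<mu>g L \<beta>prev \<beta> \<tau> :: real
    and yd :: "real^'n" and xhat xk x x1 :: "real^'p" and y1 :: "real^'n"
  assumes "proper_fun f" "closed_fun f" "convex_fun f"
    and "proper_fun g" "closed_fun g" "convex_fun g"
    and "\<mu>f \<ge> 0" and "\<mu>g \<ge> 0"
    and "convex_fun (\<lambda>z. f z - ereal (\<mu>f / 2 * norm z ^ 2))"
    and "convex_fun (\<lambda>y. fconj g y - ereal (\<mu>g / 2 * norm y ^ 2))"
    and "xk \<in> edom f" and "L > 0" and "\<beta>prev \<ge> \<beta>" and "\<beta> > 0"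
    and y1_def: "y1 = prox (1 / \<beta>) (fconj g) (yd + (1 / \<beta>) *\<^sub>R (K *v xhat))"
    and x1_def: "x1 = prox (1 / L) f (xhat - (1 / L) *\<^sub>R (transpose K *v y1))"
    and "x \<in> edom f" and "0 < \<tau>" and "\<tau> \<le> 1"
  shows "F_beta f g K \<beta> x1 yd \<le>
           ereal (1 - \<tau>) * F_beta f g K \<beta>prev xk yd + ereal \<tau> * Lag f g K x y1
         + ereal (L * \<tau>^2 / 2 * norm ((1 / \<tau>) *\<^sub>R (xhat - (1 - \<tau>) *\<^sub>R xk) - x) ^ 2
             - \<mu>f * (1 - \<tau>) * \<tau> / 2 * norm (x - xk) ^ 2
             - \<tau>^2 / 2 * (L + \<mu>f) * norm ((1 / \<tau>) *\<^sub>R (x1 - (1 - \<tau>) *\<^sub>R xk) - x) ^ 2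
             - L / 2 * norm (x1 - xhat) ^ 2
             + 1 / (2 * (\<mu>g + \<beta>)) * norm (K *v (x1 - xhat)) ^ 2
             - (1 - \<tau>) / 2 * (\<tau> * \<beta> - (\<beta>prev - \<beta>)) * norm (grad_g_beta g \<beta> (K *v xk) yd - yd) ^ 2)"
proof -
  note F = assms(1,2) and cvf = assms(9) and cvg = assms(10)
  obtain Xk X where Xk: "f xk = ereal Xk" and X: "f x = ereal X"
    by (meson assms(1,11,17) proper_fun_edom_ereal)
  have "x1 \<in> edom f"
    unfolding x1_def using \<open>L > 0\<close> by (intro prox_minimizes(1)[OF F cvf \<open>\<mu>f \<ge> 0\<close>]) simp
  then obtain X1 where X1: "f x1 = ereal X1"
    by (rule proper_fun_edom_ereal[OF assms(1)])
  show ?thesis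
  proof (cases "\<forall>y. fconj g y = \<infinity>")
    case True
    then show ?thesis
      by (simp add: F_beta_def g_beta_def X1)
  next
    \<comment> \<open>The conjugate is in fact proper, but that needs a separation argument; in the
      degenerate case g_beta is \<open>-\<infinity>\<close> and there is nothing to prove.\<close>
    case False
    then have G: "proper_fun (fconj g)"
      using fconj_proper_or_top[OF assms(4)] by blast
    define ys where "ys = grad_g_beta g \<beta> (K *v xk) yd"
    have y1: "y1 = grad_g_beta g \<beta> (K *v xhat) yd"
      by (simp add: y1_def grad_g_beta_def)
    have "grad_g_beta g \<beta> u yd \<in> edom (fconj g)" for u
      unfolding grad_g_beta_def using \<open>\<beta> > 0\<close>
      by (intro prox_minimizes(1)[OF G closed_fun_fconj cvg \<open>\<mu>g \<ge> 0\<close>]) simp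
    then obtain Y1 Ys where Y1: "fconj g y1 = ereal Y1" and Ys: "fconj g ys = ereal Ys"
      by (metis G y1 ys_def proper_fun_edom_ereal)
    have Kx1: "K *v xhat + K *v (x1 - xhat) = K *v x1"
      by (simp add: matrix_vector_mult_diff_distrib)
    note dual = g_beta_step_bound[OF G cvg \<open>\<mu>g \<ge> 0\<close> \<open>\<beta> > 0\<close> \<open>\<tau> \<le> 1\<close> y1 Y1 ys_def Ys,
        of "K *v (x1 - xhat)" \<beta>prev, unfolded Kx1]
    note primal = prox_linearized_primal_step[OF F cvf \<open>\<mu>f \<ge> 0\<close> \<open>L > 0\<close> \<open>0 < \<tau>\<close> \<open>\<tau> \<le> 1\<close>
        x1_def X1 Xk X]
    show ?thesis
    proof (rule ereal_combine_step_bounds[OF _ dual _ g_beta_ge[OF Ys] _ \<open>\<tau> \<le> 1\<close>])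
      show "F_beta f g K \<beta> x1 yd = ereal X1 + g_beta g \<beta> (K *v x1) yd"
        by (simp add: F_beta_def X1)
      show "F_beta f g K \<beta>prev xk yd = ereal Xk + g_beta g \<beta>prev (K *v xk) yd"
        by (simp add: F_beta_def Xk)
      show "Lag f g K x y1 = ereal (X + inner (K *v x) y1 - Y1)"
        by (simp add: Lag_def X Y1)
    qed (use primal in \<open>simp add: field_simps inner_commute ys_def\<close>)
  qed
qed

end
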